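(* Let $u,v,w$ be unit vectors in an inner product space (over $\mathbb{R}$ or $\mathbb{C}$). Then for every real $k\ge2$, $$\sqrt[k]{1-|\langle u,v\rangle|^k}\le\sqrt[k]{1-|\langle u,w\rangle|^k}+\sqrt[k]{1-|\langle w,v\rangle|^k};$$ in particular $$\sqrt{1-|\langle u,v\rangle|^2}\le\sqrt{1-|\langle u,w\rangle|^2}+\sqrt{1-|\langle w,v\rangle|^2}.$$ The same inequalities hold with $|\operatorname{Re}\langle\cdot,\cdot\rangle|$ in place of $|\langle\cdot,\cdot\rangle|$. *)

theory Defs
  imports "HOL-Analysis.Analysis"
begin

text \<open>A complex inner product space: an abelian group 'a with a complex scalar
multiplication sc making it a vector space over the complex numbers, and a
function ip that is linear in the first argument, conjugate symmetric and
positive definite.  (HOL-Analysis only provides real inner product spaces,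
class real_inner.)\<close>

definition complex_inner_product_space ::
  "(complex \<Rightarrow> 'a::ab_group_add \<Rightarrow> 'a) \<Rightarrow> ('a \<Rightarrow> 'a \<Rightarrow> complex) \<Rightarrow> bool" where
  "complex_inner_product_space sc ip \<longleftrightarrow>
     vector_space sc \<and>
     (\<forall>x y z. ip (x + y) z = ip x z + ip y z) \<and>
     (\<forall>c x y. ip (sc c x) y = c * ip x y) \<and>
     (\<forall>x y. ip y x = cnj (ip x y)) \<and>
     (\<forall>x. 0 \<le> Re (ip x x)) \<and>
     (\<forall>x. ip x x = 0 \<longrightarrow> x = 0)"

end

theory Submission
  imports Defs
begin

text \<open>
  Write a = \<bar>\<langle>u,w\<rangle>\<bar>, b = \<bar>\<langle>w,v\<rangle>\<bar>, c = \<bar>\<langle>u,v\<rangle>\<bar> (or the absolute values of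
  the real parts).  These are cosines of angles \<alpha>, \<beta>, \<gamma> in [0,\<pi>/2], and the
  geometric input is the angle triangle inequality in cosine form,
  a b - sin \<alpha> sin \<beta> \<le> c, obtained from Cauchy-Schwarz applied to the components
  of u and v orthogonal to w.  From it, elementary real analysis gives
  sin \<gamma> \<le> sin \<alpha> + sin \<beta>, and for k \<ge> 2 the same for the "k-sine"
  (1 - cos^k \<theta>)^(1/k), which as a function of sin \<theta> is increasing, dominates the
  identity and is subadditive (its ratio to the argument is nonincreasing).
\<close>

section \<open>The k-sine function\<close>

text \<open>For p \<ge> 1 the gap r^p - (r - 1)^p grows with r \<ge> 1, since the derivative
  p (r^(p-1) - (r - 1)^(p-1)) is nonnegative.\<close>
lemma powr_gap_mono:
  fixes p r1 r2 :: real
  assumes "1 \<le> r1" "r1 \<le> r2" "1 \<le> p"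
  shows "r1 powr p - (r1 - 1) powr p \<le> r2 powr p - (r2 - 1) powr p"
proof (rule DERIV_nonneg_imp_increasing_open[OF assms(2)])
  fix x assume x: "r1 < x" "x < r2"
  have "DERIV (\<lambda>x. x powr p - (x - 1) powr p) x :> p * x powr (p - 1) - p * (x - 1) powr (p - 1) * 1"
    using x assms by (auto intro!: derivative_eq_intros)
  moreover have "p * (x - 1) powr (p - 1) \<le> p * x powr (p - 1)"
    using x assms by (intro mult_left_mono powr_mono2) auto
  ultimately show "\<exists>y. DERIV (\<lambda>x. x powr p - (x - 1) powr p) x :> y \<and> y \<ge> 0" by auto
next
  show "continuous_on {r1..r2} (\<lambda>x. x powr p - (x - 1) powr p)"
    using assms by (auto intro!: continuous_intros continuous_on_powr')
qed

text \<open>Substituting r = 1/s: the ratio (1 - (1 - s)^p) / s^p is nonincreasing on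
  (0,1], written here without division.\<close>
lemma powr_complement_ratio_antimono:
  fixes p s1 s2 :: real
  assumes "0 < s1" "s1 \<le> s2" "s2 \<le> 1" "1 \<le> p"
  shows "s1 powr p * (1 - (1 - s2) powr p) \<le> s2 powr p * (1 - (1 - s1) powr p)"
proof -
  have rescale: "s powr p * ((1/s) powr p - (1/s - 1) powr p) = 1 - (1 - s) powr p"
    if "0 < s" "s \<le> 1" for s
  proof -
    have "s powr p * (1/s - 1) powr p = (s * (1/s - 1)) powr p"
      using that by (subst powr_mult) auto
    also have "s * (1/s - 1) = 1 - s" using that by (simp add: field_simps)
    finally have "s powr p * (1/s - 1) powr p = (1 - s) powr p" .
    moreover have "s powr p * (1/s) powr p = 1" using that by (simp add: powr_divide)
    ultimately show ?thesis by (simp add: right_diff_distrib)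
  qed
  have gap: "(1/s2) powr p - (1/s2 - 1) powr p \<le> (1/s1) powr p - (1/s1 - 1) powr p"
    using assms by (intro powr_gap_mono) (auto simp: field_simps)
  have "s1 powr p * (1 - (1 - s2) powr p)
        = s1 powr p * s2 powr p * ((1/s2) powr p - (1/s2 - 1) powr p)"
    using rescale[of s2] assms by simp
  also have "\<dots> \<le> s1 powr p * s2 powr p * ((1/s1) powr p - (1/s1 - 1) powr p)"
    using gap by (intro mult_left_mono) auto
  also have "\<dots> = s2 powr p * (1 - (1 - s1) powr p)"
    using rescale[of s1] assms by simp
  finally show ?thesis .
qed

text \<open>If s = sin \<theta> with \<theta> \<in> [0,\<pi>/2], then ksine k s = (1 - cos^k \<theta>)^(1/k).\<close>
definition ksine :: "real \<Rightarrow> real \<Rightarrow> real" where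
  "ksine k s = (1 - (1 - s\<^sup>2) powr (k/2)) powr (1/k)"

lemma ksine_radicand_nonneg:
  fixes s k :: real
  assumes "0 \<le> s" "s \<le> 1" "2 \<le> k"
  shows "0 \<le> 1 - (1 - s\<^sup>2) powr (k/2)"
proof -
  have "(1 - s\<^sup>2) powr (k/2) \<le> (1 - s\<^sup>2) powr 1"
    using assms by (intro powr_mono') (auto simp: power_le_one)
  also have "\<dots> \<le> 1" using assms by (simp add: abs_le_iff power_le_one)
  finally show ?thesis by simp
qed

lemma ksine_nonneg: "0 \<le> ksine k s"
  by (simp add: ksine_def)

lemma ksine_one: "2 \<le> k \<Longrightarrow> ksine k 1 = 1"
  by (simp add: ksine_def)

lemma ksine_of_cosine:
  assumes "0 \<le> a" "a \<le> 1" "2 \<le> k"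
  shows "(1 - a powr k) powr (1/k) = ksine k (sqrt (1 - a\<^sup>2))"
proof -
  have "(a\<^sup>2) powr (k/2) = a powr k"
  proof (cases "a = 0")
    case False
    then have "a powr k = (a powr 2) powr (k/2)" by (simp add: powr_powr)
    then show ?thesis using assms by simp
  qed (use assms in simp)
  moreover have "(sqrt (1 - a\<^sup>2))\<^sup>2 = 1 - a\<^sup>2" using assms by (simp add: power_le_one)
  ultimately show ?thesis unfolding ksine_def by simp
qed

lemma ksine_le_one:
  assumes "0 \<le> s" "s \<le> 1" "2 \<le> k"
  shows "ksine k s \<le> 1"
  unfolding ksine_def using ksine_radicand_nonneg[OF assms] assms by (intro powr_le1) auto

lemma ksine_mono:
  assumes "0 \<le> s1" "s1 \<le> s2" "s2 \<le> 1" "2 \<le> k"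
  shows "ksine k s1 \<le> ksine k s2"
proof -
  have "s1\<^sup>2 \<le> s2\<^sup>2" using assms by (intro power_mono) auto
  then have "(1 - s2\<^sup>2) powr (k/2) \<le> (1 - s1\<^sup>2) powr (k/2)"
    using assms power_le_one[of s2 2] by (intro powr_mono2) auto
  then show ?thesis unfolding ksine_def
    using ksine_radicand_nonneg[of s1 k] ksine_radicand_nonneg[of s2 k] assms
    by (intro powr_mono2) auto
qed

text \<open>The key property: ksine k s / s is nonincreasing on (0,1].  Raising to the
  power k reduces it to the previous ratio lemma with p = k/2 and s_i = t_i^2.\<close>
lemma ksine_ratio_antimono:
  assumes "0 < t1" "t1 \<le> t2" "t2 \<le> 1" "2 \<le> k"
  shows "t1 * ksine k t2 \<le> t2 * ksine k t1"
proof -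
  let ?p = "k/2"
  have sq: "t powr k = (t\<^sup>2) powr ?p" if "0 < t" for t :: real
    using that by (simp add: powr_powr flip: powr_numeral)
  have pow_k: "(t * ksine k s) powr k = (t\<^sup>2) powr ?p * (1 - (1 - s\<^sup>2) powr ?p)"
    if "0 < t" "0 \<le> s" "s \<le> 1" for t s
    using that assms ksine_radicand_nonneg[of s k] sq[of t]
    by (simp add: ksine_def powr_mult powr_powr)
  have "(t1 * ksine k t2) powr k = (t1\<^sup>2) powr ?p * (1 - (1 - t2\<^sup>2) powr ?p)"
    using assms by (intro pow_k) auto
  also have "\<dots> \<le> (t2\<^sup>2) powr ?p * (1 - (1 - t1\<^sup>2) powr ?p)"
    using assms by (intro powr_complement_ratio_antimono) (auto simp: power_mono power_le_one)
  also have "\<dots> = (t2 * ksine k t1) powr k"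
    using assms by (intro pow_k[symmetric]) auto
  finally have "(t1 * ksine k t2) powr k \<le> (t2 * ksine k t1) powr k" .
  then have "((t1 * ksine k t2) powr k) powr (1/k) \<le> ((t2 * ksine k t1) powr k) powr (1/k)"
    by (rule powr_mono2[rotated 2]) (use assms in auto)
  moreover have "(x powr k) powr (1/k) = x" if "0 \<le> x" for x
    using that assms by (simp add: powr_powr)
  ultimately show ?thesis
    using assms ksine_nonneg[of k t1] ksine_nonneg[of k t2] by simp
qed

lemma ksine_ge:
  assumes "0 \<le> s" "s \<le> 1" "2 \<le> k"
  shows "s \<le> ksine k s"
proof (cases "s = 0")
  case False
  then have "s * ksine k 1 \<le> 1 * ksine k s"
    using assms by (intro ksine_ratio_antimono) auto
  then show ?thesis using assms by (simp add: ksine_one)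
qed (use ksine_nonneg in simp)

lemma ksine_subadditive:
  assumes "0 \<le> x" "0 \<le> y" "x + y \<le> 1" "2 \<le> k"
  shows "ksine k (x + y) \<le> ksine k x + ksine k y"
proof (cases "x = 0 \<or> y = 0")
  case True
  then show ?thesis using ksine_nonneg[of k] by auto
next
  case False
  with assms have pos: "0 < x" "0 < y" by auto
  have "x * ksine k (x + y) \<le> (x + y) * ksine k x"
    using pos assms by (intro ksine_ratio_antimono) auto
  moreover have "y * ksine k (y + x) \<le> (y + x) * ksine k y"
    using pos assms by (intro ksine_ratio_antimono) auto
  ultimately have "(x + y) * ksine k (x + y) \<le> (x + y) * (ksine k x + ksine k y)"
    by (simp add: algebra_simps)
  then show ?thesis using pos by (simp add: mult_le_cancel_left_pos)
qed

section \<open>From the cosine form of the angle triangle inequality to sines\<close>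

text \<open>a, b, c are cosines of angles \<alpha>, \<beta>, \<gamma> in [0,\<pi>/2] with
  cos (\<alpha> + \<beta>) \<le> cos \<gamma>, i.e. \<gamma> \<le> \<alpha> + \<beta> whenever \<alpha> + \<beta> \<le> \<pi>.\<close>
definition angle_triangle :: "real \<Rightarrow> real \<Rightarrow> real \<Rightarrow> bool" where
  "angle_triangle a b c \<longleftrightarrow>
     0 \<le> a \<and> a \<le> 1 \<and> 0 \<le> b \<and> b \<le> 1 \<and> 0 \<le> c \<and> c \<le> 1 \<and>
     a * b - sqrt (1 - a\<^sup>2) * sqrt (1 - b\<^sup>2) \<le> c"

text \<open>If a b \<le> sin \<alpha> sin \<beta> then \<alpha> + \<beta> \<ge> \<pi>/2 and the
  right-hand side is at least 1; otherwise sin \<gamma> \<le> sin (\<alpha> + \<beta>).\<close>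
lemma angle_triangle_sine:
  assumes "angle_triangle a b c"
  shows "sqrt (1 - c\<^sup>2) \<le> sqrt (1 - a\<^sup>2) + sqrt (1 - b\<^sup>2)"
proof -
  define sin_a where "sin_a = sqrt (1 - a\<^sup>2)"
  define sin_b where "sin_b = sqrt (1 - b\<^sup>2)"
  have ab: "0 \<le> a" "a \<le> 1" "0 \<le> b" "b \<le> 1" "0 \<le> c" "c \<le> 1"
    and cos_bound: "a * b - sin_a * sin_b \<le> c"
    using assms unfolding angle_triangle_def sin_a_def sin_b_def by auto
  have sa: "sin_a\<^sup>2 = 1 - a\<^sup>2" "0 \<le> sin_a" "sin_a \<le> 1"
    unfolding sin_a_def using ab by (auto simp: power_le_one)
  have sb: "sin_b\<^sup>2 = 1 - b\<^sup>2" "0 \<le> sin_b" "sin_b \<le> 1"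
    unfolding sin_b_def using ab by (auto simp: power_le_one)
  have "sqrt (1 - c\<^sup>2) \<le> sin_a + sin_b"
  proof (cases "a * b \<le> sin_a * sin_b")
    case True
    then have "(a * b)\<^sup>2 \<le> (sin_a * sin_b)\<^sup>2" using ab sa sb by (intro power_mono) auto
    then have "a\<^sup>2 \<le> sin_b\<^sup>2" unfolding power_mult_distrib sa sb by (simp add: algebra_simps)
    then have "a \<le> sin_b" using sb(2) by (rule power2_le_imp_le)
    moreover have "sin_a * sin_a \<le> sin_a" "a * a \<le> a" using sa ab by (auto intro: mult_left_le)
    moreover have "sin_a * sin_a + a * a = 1" using sa(1) unfolding power2_eq_square by linarith
    ultimately have "1 \<le> sin_a + sin_b" by linarith
    moreover have "sqrt (1 - c\<^sup>2) \<le> 1" by simp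
    ultimately show ?thesis by linarith
  next
    case False
    then have "(a * b - sin_a * sin_b)\<^sup>2 \<le> c\<^sup>2" using cos_bound by (intro power_mono) auto
    moreover have "(a * b - sin_a * sin_b)\<^sup>2 + (sin_a * b + a * sin_b)\<^sup>2
        = (a\<^sup>2 + sin_a\<^sup>2) * (b\<^sup>2 + sin_b\<^sup>2)"
      by (simp add: power2_eq_square algebra_simps)
    ultimately have "1 - c\<^sup>2 \<le> (sin_a * b + a * sin_b)\<^sup>2" unfolding sa sb by simp
    then have "sqrt (1 - c\<^sup>2) \<le> sin_a * b + a * sin_b"
      using ab sa sb by (simp add: real_le_lsqrt)
    also have "\<dots> \<le> sin_a + sin_b"
      using ab sa sb mult_left_le[of b sin_a] mult_left_le[of a sin_b] by (simp add: mult.commute)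
    finally show ?thesis .
  qed
  then show ?thesis unfolding sin_a_def sin_b_def .
qed

text \<open>The k-version: apply the monotone, subadditive ksine to the sine inequality,
  using ksine (sin \<gamma>) \<le> 1 \<le> ksine (sin \<alpha>) + ksine (sin \<beta>) when
  sin \<alpha> + sin \<beta> \<ge> 1.\<close>
lemma angle_triangle_ksine:
  assumes "angle_triangle a b c" "2 \<le> k"
  shows "(1 - c powr k) powr (1/k) \<le> (1 - a powr k) powr (1/k) + (1 - b powr k) powr (1/k)"
proof -
  define sin_a where "sin_a = sqrt (1 - a\<^sup>2)"
  define sin_b where "sin_b = sqrt (1 - b\<^sup>2)"
  define sin_c where "sin_c = sqrt (1 - c\<^sup>2)"
  have ab: "0 \<le> a" "a \<le> 1" "0 \<le> b" "b \<le> 1" "0 \<le> c" "c \<le> 1"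
    using assms(1) unfolding angle_triangle_def by auto
  have sines: "0 \<le> sin_a" "sin_a \<le> 1" "0 \<le> sin_b" "sin_b \<le> 1" "0 \<le> sin_c" "sin_c \<le> 1"
    unfolding sin_a_def sin_b_def sin_c_def using ab by (auto simp: power_le_one)
  have sine_triangle: "sin_c \<le> sin_a + sin_b"
    unfolding sin_a_def sin_b_def sin_c_def using angle_triangle_sine[OF assms(1)] .
  have "ksine k sin_c \<le> ksine k sin_a + ksine k sin_b"
  proof (cases "1 \<le> sin_a + sin_b")
    case True
    have "ksine k sin_c \<le> 1" using sines assms(2) by (intro ksine_le_one) auto
    also have "1 \<le> ksine k sin_a + ksine k sin_b"
      using True ksine_ge[of sin_a k] ksine_ge[of sin_b k] sines assms(2) by linarith
    finally show ?thesis .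
  next
    case False
    have "ksine k sin_c \<le> ksine k (sin_a + sin_b)"
      using sine_triangle False sines assms(2) by (intro ksine_mono) auto
    also have "\<dots> \<le> ksine k sin_a + ksine k sin_b"
      using False sines assms(2) by (intro ksine_subadditive) auto
    finally show ?thesis .
  qed
  then show ?thesis
    using ksine_of_cosine ab assms(2) unfolding sin_a_def sin_b_def sin_c_def by simp
qed

section \<open>The cosine bound from orthogonal projection\<close>

text \<open>Examples: the inner product
  of a real inner product space, and the real part of a complex inner product.\<close>
locale real_form =
  fixes B :: "'v::ab_group_add \<Rightarrow> 'v \<Rightarrow> real" and sm :: "real \<Rightarrow> 'v \<Rightarrow> 'v"
  assumes diff_scale_left: "B (x - sm r y) z = B x z - r * B y z"
    and sym: "B x y = B y x"
    and Cauchy_Schwarz: "\<bar>B x y\<bar> \<le> sqrt (B x x) * sqrt (B y y)"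
begin

lemma unit_abs_le_one: "B u u = 1 \<Longrightarrow> B v v = 1 \<Longrightarrow> \<bar>B u v\<bar> \<le> 1"
  using Cauchy_Schwarz[of u v] by simp

text \<open>Project u and v onto the orthogonal complement of w; Cauchy-Schwarz for the
  projections u' and v' gives \<bar>\<langle>u,v\<rangle> - \<langle>u,w\<rangle>\<langle>w,v\<rangle>\<bar> \<le> \<parallel>u'\<parallel> \<parallel>v'\<parallel>.\<close>
lemma unit_angle_triangle:
  assumes uu: "B u u = 1" and vv: "B v v = 1" and ww: "B w w = 1"
  shows "angle_triangle (\<bar>B u w\<bar>) (\<bar>B w v\<bar>) (\<bar>B u v\<bar>)"
proof -
  define x y z where "x = B u w" and "y = B w v" and "z = B u v"
  define u' v' where "u' = u - sm x w" and "v' = v - sm y w"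
  have u'_left: "B u' t = B u t - x * B w t" for t unfolding u'_def by (rule diff_scale_left)
  have v'_left: "B v' t = B v t - y * B w t" for t unfolding v'_def by (rule diff_scale_left)
  have w_u': "B w u' = 0"
    using sym[of w u'] ww by (simp add: u'_left x_def)
  have w_v': "B w v' = 0"
    using sym[of w v'] sym[of v w] ww by (simp add: v'_left y_def)
  have "B u' v' = B v u' - y * B w u'" using sym[of u' v'] by (simp add: v'_left)
  also have "\<dots> = B u' v" using w_u' sym[of v u'] by simp
  also have "\<dots> = z - x * y" by (simp add: u'_left y_def z_def)
  finally have u'_v': "B u' v' = z - x * y" .
  have "B u' u' = B u u' - x * B w u'" by (rule u'_left)
  also have "\<dots> = B u' u" using w_u' sym[of u u'] by simp
  also have "\<dots> = 1 - x\<^sup>2" using uu sym[of w u] by (simp add: u'_left x_def power2_eq_square)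
  finally have u'_u': "B u' u' = 1 - x\<^sup>2" .
  have "B v' v' = B v v' - y * B w v'" by (rule v'_left)
  also have "\<dots> = B v' v" using w_v' sym[of v v'] by simp
  also have "\<dots> = 1 - y\<^sup>2" using vv by (simp add: v'_left y_def power2_eq_square)
  finally have v'_v': "B v' v' = 1 - y\<^sup>2" .
  have "\<bar>z - x * y\<bar> \<le> sqrt (1 - \<bar>x\<bar>\<^sup>2) * sqrt (1 - \<bar>y\<bar>\<^sup>2)"
    using Cauchy_Schwarz[of u' v'] unfolding u'_v' u'_u' v'_v' by simp
  moreover have "\<bar>x\<bar> \<le> 1" "\<bar>y\<bar> \<le> 1" "\<bar>z\<bar> \<le> 1"
    unfolding x_def y_def z_def using uu vv ww by (simp_all add: unit_abs_le_one)
  moreover have "\<bar>x\<bar> * \<bar>y\<bar> \<le> \<bar>z\<bar> + \<bar>z - x * y\<bar>"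
    unfolding abs_mult[symmetric] by linarith
  ultimately show ?thesis
    unfolding angle_triangle_def x_def[symmetric] y_def[symmetric] z_def[symmetric]
    by (intro conjI abs_ge_zero) linarith+
qed

end

lemma real_form_inner: "real_form (inner :: 'a::real_inner \<Rightarrow> 'a \<Rightarrow> real) scaleR"
proof
  fix x y z :: 'a and r :: real
  show "inner (x - r *\<^sub>R y) z = inner x z - r * inner y z" by (simp add: inner_diff_left)
  show "inner x y = inner y x" by (rule inner_commute)
  show "\<bar>inner x y\<bar> \<le> sqrt (inner x x) * sqrt (inner y y)"
    using Cauchy_Schwarz_ineq2[of x y] by (simp only: norm_eq_sqrt_inner)
qed

locale complex_ip =
  fixes sc :: "complex \<Rightarrow> 'b::ab_group_add \<Rightarrow> 'b" and ip :: "'b \<Rightarrow> 'b \<Rightarrow> complex"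
  assumes space: "complex_inner_product_space sc ip"
begin

lemmas ip_axioms = space[unfolded complex_inner_product_space_def, THEN conjunct2]

lemma ip_add_left: "ip (x + y) z = ip x z + ip y z"
  by (fact ip_axioms[THEN conjunct1, rule_format])

lemma ip_scale_left: "ip (sc c x) y = c * ip x y"
  by (fact ip_axioms[THEN conjunct2, THEN conjunct1, rule_format])

lemma ip_cnj: "ip y x = cnj (ip x y)"
  by (fact ip_axioms[THEN conjunct2, THEN conjunct2, THEN conjunct1, rule_format])

lemma ip_self_Re_nonneg: "0 \<le> Re (ip x x)"
  by (fact ip_axioms[THEN conjunct2, THEN conjunct2, THEN conjunct2, THEN conjunct1, rule_format])

lemma ip_self_eq_0: "ip x x = 0 \<Longrightarrow> x = 0"
  by (fact ip_axioms[THEN conjunct2, THEN conjunct2, THEN conjunct2, THEN conjunct2, rule_format])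

lemma ip_diff_left: "ip (x - y) z = ip x z - ip y z"
  using ip_add_left[of "x - y" y z] by (simp add: algebra_simps)

lemma ip_diff_right: "ip z (x - y) = ip z x - ip z y"
  using ip_cnj[of z "x - y"] ip_cnj[of z x] ip_cnj[of z y] by (simp add: ip_diff_left)

lemma ip_scale_right: "ip x (sc c y) = cnj c * ip x y"
  using ip_cnj[of x "sc c y"] ip_cnj[of x y] by (simp add: ip_scale_left)

lemma ip_zero_right: "ip z 0 = 0"
  using ip_diff_right[of z 0 0] by simp

lemma ip_self_real: "ip x x = complex_of_real (Re (ip x x))"
  using ip_cnj[of x x] by (simp add: complex_eq_iff)

lemma ip_Cauchy_Schwarz: "cmod (ip a b) \<le> sqrt (Re (ip a a)) * sqrt (Re (ip b b))"
proof (cases "ip b b = 0")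
  case True
  then have "b = 0" by (rule ip_self_eq_0)
  then show ?thesis by (simp add: ip_zero_right)
next
  case False
  define \<beta> \<mu> where "\<beta> = Re (ip b b)" and "\<mu> = ip a b"
  have bb: "ip b b = complex_of_real \<beta>" unfolding \<beta>_def by (rule ip_self_real)
  have "\<beta> \<noteq> 0" using False bb by auto
  then have \<beta>_pos: "0 < \<beta>" using ip_self_Re_nonneg[of b] unfolding \<beta>_def by linarith
  text \<open>a' is the component of a orthogonal to b.\<close>
  define l where "l = \<mu> / complex_of_real \<beta>"
  define a' where "a' = a - sc l b"
  have a'_left: "ip a' t = ip a t - l * ip b t" for t
    unfolding a'_def by (simp add: ip_diff_left ip_scale_left)
  have a'_right: "ip t a' = ip t a - cnj l * ip t b" for t
    unfolding a'_def by (simp add: ip_diff_right ip_scale_right)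
  have a'_b: "ip a' b = 0" using \<beta>_pos by (simp add: a'_left bb l_def \<mu>_def)
  have "ip a' a' = ip a' a" by (simp add: a'_right a'_b)
  also have "\<dots> = ip a a - l * cnj \<mu>" using ip_cnj[of a b] by (simp add: a'_left \<mu>_def)
  finally have "0 \<le> Re (ip a a) - Re (l * cnj \<mu>)" using ip_self_Re_nonneg[of a'] by simp
  moreover have "l * cnj \<mu> = complex_of_real ((cmod \<mu>)\<^sup>2 / \<beta>)"
    using complex_norm_square[of \<mu>] \<beta>_pos unfolding l_def
    by (simp add: field_simps del: complex_mult_cnj)
  ultimately have "(cmod \<mu>)\<^sup>2 / \<beta> \<le> Re (ip a a)" by simp
  then have "(cmod \<mu>)\<^sup>2 \<le> Re (ip a a) * \<beta>" by (simp add: pos_divide_le_eq[OF \<beta>_pos])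
  then have "cmod \<mu> \<le> sqrt (Re (ip a a) * \<beta>)" by (rule real_le_rsqrt)
  then show ?thesis unfolding \<mu>_def \<beta>_def real_sqrt_mult .
qed

lemma real_form_Re: "real_form (\<lambda>x y. Re (ip x y)) (\<lambda>r. sc (complex_of_real r))"
proof
  fix x y z :: 'b and r :: real
  show "Re (ip (x - sc (complex_of_real r) y) z) = Re (ip x z) - r * Re (ip y z)"
    by (simp add: ip_diff_left ip_scale_left)
  show "Re (ip x y) = Re (ip y x)" using ip_cnj[of x y] by simp
  show "\<bar>Re (ip x y)\<bar> \<le> sqrt (Re (ip x x)) * sqrt (Re (ip y y))"
    using abs_Re_le_cmod ip_Cauchy_Schwarz order_trans by blast
qed

lemma ip_unit_cmod_le_one: "ip u u = 1 \<Longrightarrow> ip v v = 1 \<Longrightarrow> cmod (ip u v) \<le> 1"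
  using ip_Cauchy_Schwarz[of u v] by simp

text \<open>The same projection argument as in unit_angle_triangle, for the modulus;
  here v is projected with the conjugate coefficient.\<close>
lemma unit_angle_triangle_cmod:
  assumes uu: "ip u u = 1" and vv: "ip v v = 1" and ww: "ip w w = 1"
  shows "angle_triangle (cmod (ip u w)) (cmod (ip w v)) (cmod (ip u v))"
proof -
  define x y z where "x = ip u w" and "y = ip w v" and "z = ip u v"
  define u' v' where "u' = u - sc x w" and "v' = v - sc (cnj y) w"
  have u'_left: "ip u' t = ip u t - x * ip w t" for t
    unfolding u'_def by (simp add: ip_diff_left ip_scale_left)
  have u'_right: "ip t u' = ip t u - cnj x * ip t w" for t
    unfolding u'_def by (simp add: ip_diff_right ip_scale_right)
  have v'_left: "ip v' t = ip v t - cnj y * ip w t" for t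
    unfolding v'_def by (simp add: ip_diff_left ip_scale_left)
  have v'_right: "ip t v' = ip t v - y * ip t w" for t
    unfolding v'_def by (simp add: ip_diff_right ip_scale_right)
  have u'_w: "ip u' w = 0" using ww by (simp add: u'_left x_def)
  have v'_w: "ip v' w = 0" using ww ip_cnj[of w v] by (simp add: v'_left y_def)
  have "ip u' v' = ip u' v - y * ip u' w" by (rule v'_right)
  also have "\<dots> = z - x * y" using ww by (simp add: u'_w u'_left x_def y_def z_def)
  finally have u'_v': "ip u' v' = z - x * y" .
  have "ip u' u' = ip u' u" by (simp add: u'_right u'_w)
  also have "\<dots> = 1 - x * cnj x" using uu ip_cnj[of u w] by (simp add: u'_left x_def)
  also have "x * cnj x = complex_of_real ((cmod x)\<^sup>2)" by (rule complex_norm_square[symmetric])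
  finally have u'_u': "Re (ip u' u') = 1 - (cmod x)\<^sup>2" by simp
  have "ip v' v' = ip v' v" by (simp add: v'_right v'_w)
  also have "\<dots> = 1 - y * cnj y" using vv by (simp add: v'_left y_def mult.commute)
  also have "y * cnj y = complex_of_real ((cmod y)\<^sup>2)" by (rule complex_norm_square[symmetric])
  finally have v'_v': "Re (ip v' v') = 1 - (cmod y)\<^sup>2" by simp
  have "cmod (z - x * y) \<le> sqrt (1 - (cmod x)\<^sup>2) * sqrt (1 - (cmod y)\<^sup>2)"
    using ip_Cauchy_Schwarz[of u' v'] unfolding u'_v' u'_u' v'_v' .
  moreover have "cmod x \<le> 1" "cmod y \<le> 1" "cmod z \<le> 1"
    unfolding x_def y_def z_def using uu vv ww by (simp_all add: ip_unit_cmod_le_one)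
  moreover have "cmod x * cmod y \<le> cmod z + cmod (z - x * y)"
    using norm_triangle_ineq4[of z "z - x * y"] by (simp add: norm_mult)
  ultimately show ?thesis
    unfolding angle_triangle_def x_def[symmetric] y_def[symmetric] z_def[symmetric]
    by (intro conjI norm_ge_zero) linarith+
qed

end

theorem corollary5:
  shows "(\<forall>(u::'a::real_inner) v w (k::real).
            norm u = 1 \<and> norm v = 1 \<and> norm w = 1 \<and> 2 \<le> k \<longrightarrow>
              (1 - \<bar>inner u v\<bar> powr k) powr (1 / k)
                \<le> (1 - \<bar>inner u w\<bar> powr k) powr (1 / k) + (1 - \<bar>inner w v\<bar> powr k) powr (1 / k))
       \<and> (\<forall>(u::'a::real_inner) v w.
            norm u = 1 \<and> norm v = 1 \<and> norm w = 1 \<longrightarrow>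
              sqrt (1 - \<bar>inner u v\<bar>^2)
                \<le> sqrt (1 - \<bar>inner u w\<bar>^2) + sqrt (1 - \<bar>inner w v\<bar>^2))
       \<and> (\<forall>(sc :: complex \<Rightarrow> 'b::ab_group_add \<Rightarrow> 'b) ip u v w (k::real).
            complex_inner_product_space sc ip \<and>
            ip u u = 1 \<and> ip v v = 1 \<and> ip w w = 1 \<and> 2 \<le> k \<longrightarrow>
              (1 - cmod (ip u v) powr k) powr (1 / k)
                \<le> (1 - cmod (ip u w) powr k) powr (1 / k) + (1 - cmod (ip w v) powr k) powr (1 / k)
            \<and> sqrt (1 - (cmod (ip u v))^2)
                \<le> sqrt (1 - (cmod (ip u w))^2) + sqrt (1 - (cmod (ip w v))^2)
            \<and> (1 - \<bar>Re (ip u v)\<bar> powr k) powr (1 / k)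
                \<le> (1 - \<bar>Re (ip u w)\<bar> powr k) powr (1 / k) + (1 - \<bar>Re (ip w v)\<bar> powr k) powr (1 / k)
            \<and> sqrt (1 - \<bar>Re (ip u v)\<bar>^2)
                \<le> sqrt (1 - \<bar>Re (ip u w)\<bar>^2) + sqrt (1 - \<bar>Re (ip w v)\<bar>^2))"
proof -
  have real: "angle_triangle (\<bar>inner u w\<bar>) (\<bar>inner w v\<bar>) (\<bar>inner u v\<bar>)"
    if "norm u = 1" "norm v = 1" "norm w = 1" for u v w :: 'a
    using real_form.unit_angle_triangle[OF real_form_inner] that by (simp add: norm_eq_1)
  have complex_cmod: "angle_triangle (cmod (ip u w)) (cmod (ip w v)) (cmod (ip u v))"
    and complex_Re: "angle_triangle (\<bar>Re (ip u w)\<bar>) (\<bar>Re (ip w v)\<bar>) (\<bar>Re (ip u v)\<bar>)"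
    if "complex_inner_product_space sc ip" "ip u u = 1" "ip v v = 1" "ip w w = 1"
    for sc :: "complex \<Rightarrow> 'b \<Rightarrow> 'b" and ip u v w
    using that complex_ip.unit_angle_triangle_cmod[of sc ip]
      real_form.unit_angle_triangle[OF complex_ip.real_form_Re[of sc ip]]
    by (simp_all add: complex_ip_def)
  show ?thesis
    by (intro conjI allI impI; elim conjE; (rule angle_triangle_ksine angle_triangle_sine)?;
        (rule real complex_cmod complex_Re)?; assumption)
qed

end
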